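(* Let $M$ be a $\lambda$-term, $V$ a value and $x$ a variable. Then $$\mathcal T(M\{x:=V\})=\bigcup_{t\in\mathcal T(M)}\ \bigcup_{[v_1,\dots,v_n]\in\mathcal T(V)} t\langle x:=v_1,\dots,v_n\rangle.$$
   Context: $\lambda$-terms and values are $M::=V\mid MN$, $V::=x\mid\lambda x.M$, up to $\alpha$-conversion; $M\{x:=V\}$ is capture-avoiding substitution. Resource calculus: resource values $v::=x\mid\lambda x.t$; simple terms $s,t::=st\mid[v_1,\dots,v_k]$ ($k\ge0$, bags are finite multisets); $[x^n]$ is $n$ copies of $x$. Linear substitution: if $x$ has exactly $n$ free occurrences in $e$, enumerated $x_1,\dots,x_n$, then $e\langle x:=v_1,\dots,v_n\rangle=\{e[x_1:=v_{\pi(1)},\dots,x_n:=v_{\pi(n)}]\mid\pi\text{ a permutation of }\{1,\dots,n\}\}$ (replacing the $i$-th occurrence by $v_{\pi(i)}$); otherwise it is $\emptyset$. Taylor expansion: $\mathcal T(x)=\{[x^n]\mid n\ge0\}$, $\mathcal T(\lambda x.N)=\{[\lambda x.t_1,\dots,\lambda x.t_n]\mid n\ge0,\ t_i\in\mathcal T(N)\}$, $\mathcal T(PQ)=\{st\mid s\in\mathcal T(P),t\in\mathcal T(Q)\}$. *)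

theory Defs
  imports "HOL-Library.Multiset"
begin

text \<open>Lambda-terms up to alpha-conversion, represented with de Bruijn indices.
  A free variable named x :: nat is represented under d binders by the index x + d.\<close>

datatype lterm = LVar nat | LAbs lterm | LApp lterm lterm

fun is_value :: "lterm \<Rightarrow> bool" where
  "is_value (LVar _) = True"
| "is_value (LAbs _) = True"
| "is_value (LApp _ _) = False"

fun llift :: "nat \<Rightarrow> lterm \<Rightarrow> lterm" where
  "llift k (LVar i) = LVar (if i < k then i else Suc i)"
| "llift k (LAbs M) = LAbs (llift (Suc k) M)"
| "llift k (LApp M N) = LApp (llift k M) (llift k N)"

fun lsubst :: "lterm \<Rightarrow> nat \<Rightarrow> lterm \<Rightarrow> lterm" where
  "lsubst (LVar y) x V = (if y = x then V else LVar y)"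
| "lsubst (LAbs M) x V = LAbs (lsubst M (Suc x) (llift 0 V))"
| "lsubst (LApp M N) x V = LApp (lsubst M x V) (lsubst N x V)"

datatype rval = RVar nat | RAbs sterm
     and sterm = SApp sterm sterm | Bag "rval multiset"

primrec rlift :: "nat \<Rightarrow> rval \<Rightarrow> rval" and slift :: "nat \<Rightarrow> sterm \<Rightarrow> sterm" where
  "rlift k (RVar i) = RVar (if i < k then i else Suc i)"
| "rlift k (RAbs t) = RAbs (slift (Suc k) t)"
| "slift k (SApp s t) = SApp (slift k s) (slift k t)"
| "slift k (Bag B) = Bag (image_mset (rlift k) B)"

text \<open>Linear substitution: lsubs x B e e' holds iff e' is obtained from e by replacing
  each free occurrence of x by exactly one element of the bag B, using every element of B
  exactly once (i.e. the i-th occurrence by v_{pi(i)} for a permutation pi).\<close>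
inductive lsubv :: "nat \<Rightarrow> rval multiset \<Rightarrow> rval \<Rightarrow> rval \<Rightarrow> bool"
  and lsubs :: "nat \<Rightarrow> rval multiset \<Rightarrow> sterm \<Rightarrow> sterm \<Rightarrow> bool" where
  lsv_hit: "lsubv x {#w#} (RVar x) w"
| lsv_other: "y \<noteq> x \<Longrightarrow> lsubv x {#} (RVar y) (RVar y)"
| lsv_abs: "lsubs (Suc x) (image_mset (rlift 0) B) t t' \<Longrightarrow> lsubv x B (RAbs t) (RAbs t')"
| lss_app: "lsubs x B1 s s' \<Longrightarrow> lsubs x B2 t t' \<Longrightarrow> lsubs x (B1 + B2) (SApp s t) (SApp s' t')"
| lss_nil: "lsubs x {#} (Bag {#}) (Bag {#})"
| lss_cons: "lsubv x B1 v v' \<Longrightarrow> lsubs x B2 (Bag vs) (Bag ws) \<Longrightarrow>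
     lsubs x (B1 + B2) (Bag (add_mset v vs)) (Bag (add_mset v' ws))"

definition linsubst :: "sterm \<Rightarrow> nat \<Rightarrow> rval multiset \<Rightarrow> sterm set" where
  "linsubst e x B = {e'. lsubs x B e e'}"

fun taylor :: "lterm \<Rightarrow> sterm set" where
  "taylor (LVar x) = {Bag (replicate_mset n (RVar x)) | n. True}"
| "taylor (LAbs N) = {Bag (mset (map RAbs ts)) | ts. set ts \<subseteq> taylor N}"
| "taylor (LApp P Q) = {SApp s t | s t. s \<in> taylor P \<and> t \<in> taylor Q}"

end

theory Submission
  imports Defs
begin

(* The Taylor expansion of a value V consists of all finite bags over a set of resource values
   (taylor_rvals V), and linear substitution into a bag acts on each element separately,
   consuming a sub-bag of the substituted bag for each one.  For a variable or an abstraction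
   the equation therefore reduces to its element-wise version, which for an abstraction is the
   induction hypothesis under the binder (with V lifted); for an application the substituted
   bag is split between the two sides. *)

lemma set_mset_subset_image_iff:
  "set_mset A \<subseteq> f ` X \<longleftrightarrow> (\<exists>A0. set_mset A0 \<subseteq> X \<and> A = image_mset f A0)"
proof
  assume "set_mset A \<subseteq> f ` X"
  then show "\<exists>A0. set_mset A0 \<subseteq> X \<and> A = image_mset f A0"
  proof (induction A)
    case empty
    show ?case by simp
  next
    case (add a A)
    then obtain A0 a0 where "set_mset A0 \<subseteq> X" "A = image_mset f A0" "a0 \<in> X" "a = f a0"
      by auto
    then show ?case by (intro exI[of _ "add_mset a0 A0"]) simp
  qed
qed force

lemma Collect_set_mset_subset_image:
  "{A. set_mset A \<subseteq> f ` X} = image_mset f ` {A. set_mset A \<subseteq> X}"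
  by (auto simp: set_mset_subset_image_iff)

fun taylor_rvals :: "lterm \<Rightarrow> rval set" where
  "taylor_rvals (LVar x) = {RVar x}"
| "taylor_rvals (LAbs N) = RAbs ` taylor N"
| "taylor_rvals (LApp P Q) = {}"

lemma taylor_value_eq:
  assumes "is_value V"
  shows "taylor V = Bag ` {A. set_mset A \<subseteq> taylor_rvals V}"
proof (cases V)
  case (LVar y)
  then show ?thesis by (auto dest: set_mset_subset_singletonD)
next
  case (LAbs N)
  have "taylor (LAbs N) = Bag ` {mset (map RAbs ts) | ts. set ts \<subseteq> taylor N}"
    by auto
  also have "{mset (map RAbs ts) | ts. set ts \<subseteq> taylor N} = {A. set_mset A \<subseteq> RAbs ` taylor N}"
    by (auto simp: set_mset_subset_image_iff) (metis ex_mset set_mset_mset)+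
  finally show ?thesis using LAbs by simp
qed (use assms in simp)

lemma is_value_llift: "is_value V \<Longrightarrow> is_value (llift k V)"
  by (cases V) auto

lemma is_value_lsubst: "is_value M \<Longrightarrow> is_value V \<Longrightarrow> is_value (lsubst M x V)"
  by (cases M) auto

lemma taylor_llift: "taylor (llift k M) = slift k ` taylor M"
proof (induction M arbitrary: k)
  case (LVar i)
  have "taylor (LVar j) = range (\<lambda>n. Bag (replicate_mset n (RVar j)))" for j
    by auto
  then show ?case by (simp add: image_image)
next
  case (LAbs N)
  have "taylor (llift k (LAbs N)) = Bag ` {A. set_mset A \<subseteq> RAbs ` slift (Suc k) ` taylor N}"
    by (simp add: taylor_value_eq[of "LAbs _"] LAbs.IH del: taylor.simps)
  also have "\<dots> = Bag ` {A. set_mset A \<subseteq> rlift k ` RAbs ` taylor N}"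
    by (simp add: image_image)
  also have "\<dots> = slift k ` Bag ` {A. set_mset A \<subseteq> RAbs ` taylor N}"
    by (simp add: Collect_set_mset_subset_image image_image multiset.map_comp comp_def)
  also have "\<dots> = slift k ` taylor (LAbs N)"
    by (simp add: taylor_value_eq[of "LAbs N"] del: taylor.simps)
  finally show ?case .
next
  case (LApp P Q)
  then show ?case by (auto simp: image_def) (metis slift.simps(1))
qed

lemma taylor_rvals_llift: "taylor_rvals (llift k V) = rlift k ` taylor_rvals V"
  by (cases V) (auto simp: taylor_llift image_image)

lemma lsubs_BagE:
  assumes "lsubs x B (Bag A) e"
  obtains A' where "e = Bag A'"
  using assms by (cases rule: lsubs.cases) auto

lemma lsubs_SApp_iff:
  "lsubs x B (SApp t1 t2) s \<longleftrightarrow>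
   (\<exists>B1 B2 s1 s2. B = B1 + B2 \<and> lsubs x B1 t1 s1 \<and> lsubs x B2 t2 s2 \<and> s = SApp s1 s2)"
  by (rule iffI, erule lsubs.cases, auto intro: lss_app)

lemma lsubv_RVar_iff:
  "lsubv x B (RVar y) v' \<longleftrightarrow> (if y = x then B = {#v'#} else B = {#} \<and> v' = RVar y)"
  by (auto elim: lsubv.cases intro: lsubv_lsubs.intros)

lemma lsubv_RAbs_iff:
  "lsubv x B (RAbs t) v' \<longleftrightarrow> (\<exists>t'. v' = RAbs t' \<and> lsubs (Suc x) (image_mset (rlift 0) B) t t')"
  by (auto elim: lsubv.cases intro: lsv_abs)

lemma lsubs_Bag_iff:
  "(\<exists>A B. set_mset A \<subseteq> R \<and> set_mset B \<subseteq> S \<and> lsubs x B (Bag A) (Bag A')) \<longleftrightarrow>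
   (\<forall>v'\<in>#A'. \<exists>v\<in>R. \<exists>B. set_mset B \<subseteq> S \<and> lsubv x B v v')"
proof
  have elementwise: "\<forall>v'\<in>#A'. \<exists>v\<in>R. \<exists>B. set_mset B \<subseteq> S \<and> lsubv x B v v'"
    if "lsubs x B e e'" "e = Bag A" "e' = Bag A'" "set_mset A \<subseteq> R" "set_mset B \<subseteq> S"
    for x B e e' A A'
    using that
    by (induction arbitrary: A A' rule: lsubv_lsubs.inducts(2)[where ?P1.0 = "\<lambda>_ _ _ _. True"])
      (auto, blast)
  assume "\<exists>A B. set_mset A \<subseteq> R \<and> set_mset B \<subseteq> S \<and> lsubs x B (Bag A) (Bag A')"
  then show "\<forall>v'\<in>#A'. \<exists>v\<in>R. \<exists>B. set_mset B \<subseteq> S \<and> lsubv x B v v'"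
    by (elim exE conjE) (rule elementwise[OF _ refl refl])
next
  show "\<exists>A B. set_mset A \<subseteq> R \<and> set_mset B \<subseteq> S \<and> lsubs x B (Bag A) (Bag A')"
    if "\<forall>v'\<in>#A'. \<exists>v\<in>R. \<exists>B. set_mset B \<subseteq> S \<and> lsubv x B v v'"
    using that
  proof (induction A')
    case empty
    show ?case by (intro exI[of _ "{#}"]) (simp add: lss_nil)
  next
    case (add v' A')
    obtain A B where "set_mset A \<subseteq> R" "set_mset B \<subseteq> S" "lsubs x B (Bag A) (Bag A')"
      using add by auto
    moreover obtain v B' where "v \<in> R" "set_mset B' \<subseteq> S" "lsubv x B' v v'"
      using add.prems by auto
    ultimately show ?case by (intro exI[of _ "add_mset v A"] exI[of _ "B' + B"]) (auto intro: lss_cons)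
  qed
qed

lemma taylor_value_lsubs_iff:
  assumes "is_value M" "is_value W"
    and rvals: "\<And>v'. v' \<in> taylor_rvals W \<longleftrightarrow>
                   (\<exists>v\<in>taylor_rvals M. \<exists>B. set_mset B \<subseteq> S \<and> lsubv x B v v')"
  shows "s \<in> taylor W \<longleftrightarrow> (\<exists>t\<in>taylor M. \<exists>B. set_mset B \<subseteq> S \<and> lsubs x B t s)"
proof -
  have "s \<in> taylor W \<longleftrightarrow> (\<exists>A'. s = Bag A' \<and> set_mset A' \<subseteq> taylor_rvals W)"
    using taylor_value_eq[OF assms(2)] by auto
  also have "\<dots> \<longleftrightarrow> (\<exists>A'. s = Bag A' \<and>
      (\<exists>A B. set_mset A \<subseteq> taylor_rvals M \<and> set_mset B \<subseteq> S \<and> lsubs x B (Bag A) (Bag A')))"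
    by (simp only: lsubs_Bag_iff) (simp only: subset_eq rvals)
  also have "\<dots> \<longleftrightarrow> (\<exists>t\<in>taylor M. \<exists>B. set_mset B \<subseteq> S \<and> lsubs x B t s)"
  proof
    assume "\<exists>t\<in>taylor M. \<exists>B. set_mset B \<subseteq> S \<and> lsubs x B t s"
    then obtain A B where "set_mset A \<subseteq> taylor_rvals M" "set_mset B \<subseteq> S" "lsubs x B (Bag A) s"
      by (auto simp: taylor_value_eq[OF assms(1)])
    moreover from \<open>lsubs x B (Bag A) s\<close> obtain A' where "s = Bag A'"
      by (rule lsubs_BagE)
    ultimately show "\<exists>A'. s = Bag A' \<and>
      (\<exists>A B. set_mset A \<subseteq> taylor_rvals M \<and> set_mset B \<subseteq> S \<and> lsubs x B (Bag A) (Bag A'))"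
      by blast
  qed (auto simp: taylor_value_eq[OF assms(1)])
  finally show ?thesis .
qed

lemma taylor_lsubst_iff:
  assumes "is_value V"
  shows "s \<in> taylor (lsubst M x V) \<longleftrightarrow>
    (\<exists>t\<in>taylor M. \<exists>B. set_mset B \<subseteq> taylor_rvals V \<and> lsubs x B t s)"
  using assms
proof (induction M arbitrary: x V s)
  case (LVar y)
  have rvals: "v' \<in> taylor_rvals (lsubst (LVar y) x V) \<longleftrightarrow>
    (\<exists>v\<in>taylor_rvals (LVar y). \<exists>B. set_mset B \<subseteq> taylor_rvals V \<and> lsubv x B v v')" for v'
    by (auto simp: lsubv_RVar_iff)
  show ?case
    by (rule taylor_value_lsubs_iff[OF _ _ rvals]) (simp_all add: is_value_lsubst LVar.prems)
next
  case (LAbs N)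
  have IH: "t' \<in> taylor (lsubst N (Suc x) (llift 0 V)) \<longleftrightarrow>
    (\<exists>t\<in>taylor N. \<exists>B. set_mset B \<subseteq> taylor_rvals (llift 0 V) \<and> lsubs (Suc x) B t t')" for t'
    using LAbs.IH is_value_llift LAbs.prems by blast
  have rvals: "v' \<in> taylor_rvals (lsubst (LAbs N) x V) \<longleftrightarrow>
    (\<exists>v\<in>taylor_rvals (LAbs N). \<exists>B. set_mset B \<subseteq> taylor_rvals V \<and> lsubv x B v v')" for v'
    by (auto simp: IH image_iff taylor_rvals_llift set_mset_subset_image_iff lsubv_RAbs_iff) blast+
  show ?case
    by (rule taylor_value_lsubs_iff[OF _ _ rvals]) (simp_all add: is_value_lsubst LAbs.prems)
next
  case (LApp P Q)
  let ?S = "taylor_rvals V"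
  note IH = LApp.IH[OF LApp.prems]
  show ?case
  proof
    assume "s \<in> taylor (lsubst (LApp P Q) x V)"
    then obtain s1 s2 t1 t2 B1 B2 where "s = SApp s1 s2" "t1 \<in> taylor P" "t2 \<in> taylor Q"
      "set_mset B1 \<subseteq> ?S" "lsubs x B1 t1 s1" "set_mset B2 \<subseteq> ?S" "lsubs x B2 t2 s2"
      using IH by auto
    moreover from calculation have "lsubs x (B1 + B2) (SApp t1 t2) s"
      by (simp add: lss_app)
    ultimately show "\<exists>t\<in>taylor (LApp P Q). \<exists>B. set_mset B \<subseteq> ?S \<and> lsubs x B t s"
      by (intro bexI[of _ "SApp t1 t2"] exI[of _ "B1 + B2"]) auto
  next
    assume "\<exists>t\<in>taylor (LApp P Q). \<exists>B. set_mset B \<subseteq> ?S \<and> lsubs x B t s"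
    then obtain s1 s2 t1 t2 B1 B2 where "s = SApp s1 s2" "t1 \<in> taylor P" "t2 \<in> taylor Q"
      "set_mset B1 \<subseteq> ?S" "lsubs x B1 t1 s1" "set_mset B2 \<subseteq> ?S" "lsubs x B2 t2 s2"
      by (auto simp: lsubs_SApp_iff)
    then show "s \<in> taylor (lsubst (LApp P Q) x V)"
      using IH by auto
  qed
qed

theorem lemma4p3:
  fixes M V :: lterm and x :: nat
  assumes "is_value V"
  shows "taylor (lsubst M x V) = (\<Union>t\<in>taylor M. \<Union>B\<in>{B. Bag B \<in> taylor V}. linsubst t x B)"
proof -
  have "{B. Bag B \<in> taylor V} = {B. set_mset B \<subseteq> taylor_rvals V}"
    using taylor_value_eq[OF assms] by auto
  then show ?thesis
    by (auto simp: linsubst_def taylor_lsubst_iff[OF assms]) blast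
qed

end
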